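(* For every single-use two-way transducer there is $k\in\{1,2,\dots\}$ such that for every input $w$, the accepting run on $\vdash w\dashv$ (if it exists) has at most $k$ configurations whose head is at any given position.
   Context: Fix a countably infinite set $\mathbb A$ of atoms; polynomial orbit-finite sets are built from $\mathbb A$ and singletons by finite products and disjoint unions; equivariant means commuting with all bijections of $\mathbb A$. A two-way single-use transducer has polynomial orbit-finite alphabets $\Sigma,\Gamma$, finitely many states with initial $q_0$, finitely many registers with values in $\mathbb A+\bot$, and a deterministic transition function assigning to each state a question and, per answer, a next state and an action. Questions: an equivariant function $\Sigma+\{\vdash,\dashv\}\to\{\mathrm{yes},\mathrm{no}\}$ of the letter under the head; or equality of registers $r_1,r_2$ (reject if one is $\bot$), after which $r_1,r_2$ are set to $\bot$. Actions: store an equivariant function $\Sigma+\{\vdash,\dashv\}\to\mathbb A+\bot$ of the current letter in a register; append $f(r_1,\dots,r_k)$ to the output for equivariant $f:\mathbb A^k\to\Gamma$ and distinct registers, setting them to $\bot$ (reject if one is $\bot$); move the head left or right; accept or reject. A configuration consists of head position, state, register valuation and output so far; the run on $w$ starts on $\vdash$ of $\vdash w\dashv$ in $q_0$ with all registers $\bot$ and empty output; an accepting run is one ending with the accept action. *)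

theory Defs
  imports Main
begin

text \<open>Atoms are modelled by the countably infinite type nat; a permutation of the
atoms is a bijection pi :: nat => nat.\<close>

datatype pof = PAtoms | PUnit | PProd pof pof | PSum pof pof

datatype aval = AAtom nat | AUnit | APair aval aval | AInl aval | AInr aval

fun inP :: "pof \<Rightarrow> aval \<Rightarrow> bool" where
  "inP PAtoms v = (\<exists>a. v = AAtom a)"
| "inP PUnit v = (v = AUnit)"
| "inP (PProd X Y) v = (\<exists>x y. v = APair x y \<and> inP X x \<and> inP Y y)"
| "inP (PSum X Y) v = ((\<exists>x. v = AInl x \<and> inP X x) \<or> (\<exists>y. v = AInr y \<and> inP Y y))"

fun aperm :: "(nat \<Rightarrow> nat) \<Rightarrow> aval \<Rightarrow> aval" where
  "aperm \<pi> (AAtom a) = AAtom (\<pi> a)"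
| "aperm \<pi> AUnit = AUnit"
| "aperm \<pi> (APair x y) = APair (aperm \<pi> x) (aperm \<pi> y)"
| "aperm \<pi> (AInl x) = AInl (aperm \<pi> x)"
| "aperm \<pi> (AInr x) = AInr (aperm \<pi> x)"

datatype 'l tletter = LMark | Sym 'l | RMark

definition in_tape :: "pof \<Rightarrow> aval tletter \<Rightarrow> bool" where
  "in_tape S l = (l = LMark \<or> l = RMark \<or> (\<exists>a. l = Sym a \<and> inP S a))"

definition tperm :: "(nat \<Rightarrow> nat) \<Rightarrow> aval tletter \<Rightarrow> aval tletter" where
  "tperm \<pi> = map_tletter (aperm \<pi>)"

datatype 'r question = QTest "aval tletter \<Rightarrow> bool" | QEq 'r 'r

datatype 'r action =
    Store 'r "aval tletter \<Rightarrow> nat option"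
  | Output "'r list" "nat list \<Rightarrow> aval"
  | MoveL | MoveR | Accept | Reject

record ('q, 'r) sut =
  sigma :: pof
  gamma :: pof
  init :: 'q
  delta :: "'q \<Rightarrow> 'r question \<times> (bool \<Rightarrow> 'q \<times> 'r action)"

definition question_ok :: "pof \<Rightarrow> 'r question \<Rightarrow> bool" where
  "question_ok S Q = (case Q of
      QTest f \<Rightarrow> (\<forall>\<pi> l. bij \<pi> \<longrightarrow> in_tape S l \<longrightarrow> f (tperm \<pi> l) = f l)
    | QEq r1 r2 \<Rightarrow> True)"

definition action_ok :: "pof \<Rightarrow> pof \<Rightarrow> 'r action \<Rightarrow> bool" where
  "action_ok S G act = (case act of
      Store r h \<Rightarrow> (\<forall>\<pi> l. bij \<pi> \<longrightarrow> in_tape S l \<longrightarrow> h (tperm \<pi> l) = map_option \<pi> (h l))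
    | Output rs f \<Rightarrow> distinct rs
          \<and> (\<forall>xs. length xs = length rs \<longrightarrow> inP G (f xs))
          \<and> (\<forall>\<pi> xs. bij \<pi> \<longrightarrow> length xs = length rs \<longrightarrow> f (map \<pi> xs) = aperm \<pi> (f xs))
    | _ \<Rightarrow> True)"

text \<open>Well-formedness: all the functions used are equivariant with the right
domains/codomains (finiteness of states and registers is imposed via the
sort finite on the type parameters).\<close>
definition wf_sut :: "('q, 'r) sut \<Rightarrow> bool" where
  "wf_sut T = (\<forall>q. question_ok (sigma T) (fst (delta T q))
       \<and> (\<forall>b. action_ok (sigma T) (gamma T) (snd (snd (delta T q) b))))"

record ('q, 'r) config =
  pos :: nat
  st :: 'q
  regs :: "'r \<Rightarrow> nat option"
  out :: "aval list"

datatype ('q, 'r) result = Cont "('q, 'r) config" | Acc "aval list" | Rej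

text \<open>Position 0 is the left endmarker, positions 1..length w hold w,
position length w + 1 is the right endmarker.\<close>
definition tape_at :: "aval list \<Rightarrow> nat \<Rightarrow> aval tletter" where
  "tape_at w p = (if p = 0 then LMark else if p \<le> length w then Sym (w ! (p - 1)) else RMark)"

definition exec :: "aval list \<Rightarrow> 'q \<times> 'r action \<Rightarrow> ('q, 'r) config \<Rightarrow> ('q, 'r) result" where
  "exec w qa c = (case qa of (q', act) \<Rightarrow> (case act of
      Store r h \<Rightarrow> Cont (c\<lparr>st := q', regs := (regs c)(r := h (tape_at w (pos c)))\<rparr>)
    | Output rs f \<Rightarrow>
        (if \<exists>r\<in>set rs. regs c r = None then Rej
         else Cont (c\<lparr>st := q',
                      regs := (\<lambda>r. if r \<in> set rs then None else regs c r),
                      out := out c @ [f (map (\<lambda>r. the (regs c r)) rs)]\<rparr>))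
    | MoveL \<Rightarrow> (if pos c = 0 then Rej else Cont (c\<lparr>st := q', pos := pos c - 1\<rparr>))
    | MoveR \<Rightarrow> (if pos c \<ge> length w + 1 then Rej else Cont (c\<lparr>st := q', pos := pos c + 1\<rparr>))
    | Accept \<Rightarrow> Acc (out c)
    | Reject \<Rightarrow> Rej))"

definition step :: "('q, 'r) sut \<Rightarrow> aval list \<Rightarrow> ('q, 'r) config \<Rightarrow> ('q, 'r) result" where
  "step T w c = (case delta T (st c) of
      (QTest f, g) \<Rightarrow> exec w (g (f (tape_at w (pos c)))) c
    | (QEq r1 r2, g) \<Rightarrow>
        (if regs c r1 = None \<or> regs c r2 = None then Rej
         else exec w (g (regs c r1 = regs c r2)) (c\<lparr>regs := (regs c)(r1 := None, r2 := None)\<rparr>)))"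

definition init_config :: "('q, 'r) sut \<Rightarrow> ('q, 'r) config" where
  "init_config T = \<lparr>pos = 0, st = init T, regs = (\<lambda>_. None), out = []\<rparr>"

definition accepting_run :: "('q, 'r) sut \<Rightarrow> aval list \<Rightarrow> ('q, 'r) config list \<Rightarrow> bool" where
  "accepting_run T w cs = (cs \<noteq> [] \<and> hd cs = init_config T
     \<and> (\<forall>i. Suc i < length cs \<longrightarrow> step T w (cs ! i) = Cont (cs ! Suc i))
     \<and> (\<exists>res. step T w (last cs) = Acc res))"

end

theory Submission
  imports Defs "HOL-Library.Cardinality"
begin

text \<open>Consider visits of a halting run to one head position that agree in the state and in the
set of defined registers; they differ only in the atoms stored in the registers. Call a set of
visits coherent for a register set J if any two of them agree outside J. Single use is what makes
such a set shrink: a test of the current letter is answered alike by all of them, stores and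
outputs keep them in lockstep, and an equality test erases the two registers it reads. So the
successors of visits with the same test outcome are again coherent, for J minus the tested
registers. A test that separates the visits must read a register of J, and visits that are never
separated cannot be two, since the run would reach its halting step at one of them while the others
continue. Counting the branchings gives at most 2^|J| coherent visits, hence at most
|Q| * 2^|R| * 2^|R| visits to any position.\<close>

definition similar :: "'r set \<Rightarrow> ('q, 'r) config \<Rightarrow> ('q, 'r) config \<Rightarrow> bool" where
  "similar J c c' \<longleftrightarrow> pos c = pos c' \<and> st c = st c'
      \<and> (\<forall>r. r \<notin> J \<longrightarrow> regs c r = regs c' r)
      \<and> (\<forall>r. (regs c r = None) = (regs c' r = None))"

fun result_similar :: "'r set \<Rightarrow> ('q, 'r) result \<Rightarrow> ('q, 'r) result \<Rightarrow> bool" where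
  "result_similar J (Cont d) (Cont d') = similar J d d'"
| "result_similar J (Acc x) (Acc y) = True"
| "result_similar J Rej Rej = True"
| "result_similar J _ _ = False"

definition eq_test_outcome :: "('q, 'r) sut \<Rightarrow> ('q, 'r) config \<Rightarrow> bool" where
  "eq_test_outcome T c = (case fst (delta T (st c)) of
      QEq r1 r2 \<Rightarrow> regs c r1 = regs c r2
    | QTest f \<Rightarrow> True)"

definition remaining_regs :: "('q, 'r) sut \<Rightarrow> 'r set \<Rightarrow> ('q, 'r) config \<Rightarrow> 'r set" where
  "remaining_regs T J c = (case fst (delta T (st c)) of
      QEq r1 r2 \<Rightarrow> J - {r1, r2}
    | QTest f \<Rightarrow> J)"

lemma result_similar_ContD: "result_similar J r (Cont d) \<Longrightarrow> \<exists>d'. r = Cont d'"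
  by (cases r) auto

lemma remaining_regs_subset: "remaining_regs T J c \<subseteq> J"
  by (auto simp: remaining_regs_def split: question.splits)

lemma remaining_regs_cong: "st c = st c' \<Longrightarrow> remaining_regs T J c = remaining_regs T J c'"
  by (simp add: remaining_regs_def)

lemma eq_test_outcome_eq_if_remaining_regs_eq:
  assumes "similar J c c'" "remaining_regs T J c = J"
  shows "eq_test_outcome T c = eq_test_outcome T c'"
proof (cases "fst (delta T (st c))")
  case (QEq r1 r2)
  with assms(2) have "r1 \<notin> J" "r2 \<notin> J" by (simp add: remaining_regs_def; blast)+
  with assms(1) QEq show ?thesis by (simp add: similar_def eq_test_outcome_def)
qed (use assms(1) in \<open>simp add: similar_def eq_test_outcome_def\<close>)

lemma exec_similar:
  assumes "similar J c c'"
  shows "result_similar J (exec w qa c) (exec w qa c')"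
proof -
  obtain q' act where "qa = (q', act)" by (cases qa)
  with assms show ?thesis
    by (cases act) (auto simp: exec_def similar_def)
qed

lemma step_similar:
  assumes sim: "similar J c c'" and outcome: "eq_test_outcome T c = eq_test_outcome T c'"
  shows "result_similar (remaining_regs T J c) (step T w c) (step T w c')"
proof -
  obtain Q g where d: "delta T (st c) = (Q, g)" by (cases "delta T (st c)")
  have d': "delta T (st c') = (Q, g)" using d sim by (simp add: similar_def)
  show ?thesis
  proof (cases Q)
    case (QTest f)
    have "tape_at w (pos c) = tape_at w (pos c')" using sim by (simp add: similar_def)
    with exec_similar[OF sim] d d' QTest show ?thesis
      by (simp add: step_def remaining_regs_def)
  next
    case (QEq r1 r2)
    have undef: "(regs c r = None) = (regs c' r = None)" for r
      using sim by (simp add: similar_def)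
    have answer: "(regs c r1 = regs c r2) = (regs c' r1 = regs c' r2)"
      using outcome d d' QEq by (simp add: eq_test_outcome_def)
    have "similar (J - {r1, r2}) (c\<lparr>regs := (regs c)(r1 := None, r2 := None)\<rparr>)
                                 (c'\<lparr>regs := (regs c')(r1 := None, r2 := None)\<rparr>)"
      using sim by (auto simp: similar_def)
    from exec_similar[OF this] show ?thesis
      using d d' QEq undef[of r1] undef[of r2] answer
      by (simp add: step_def remaining_regs_def)
  qed
qed

context
  fixes T :: "('q, 'r::finite) sut" and w :: "aval list" and cs :: "('q, 'r) config list"
  assumes run_step: "\<And>i. Suc i < length cs \<Longrightarrow> step T w (cs ! i) = Cont (cs ! Suc i)"
    and run_nonempty: "cs \<noteq> []"
    and run_halts: "\<And>d. step T w (last cs) \<noteq> Cont d"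
begin

definition coherent :: "'r set \<Rightarrow> nat set \<Rightarrow> bool" where
  "coherent J S \<longleftrightarrow> S \<subseteq> {..<length cs} \<and> (\<forall>t\<in>S. \<forall>t'\<in>S. similar J (cs ! t) (cs ! t'))"

lemma coherent_finite: "coherent J S \<Longrightarrow> finite S"
  unfolding coherent_def using finite_subset by blast

lemma coherent_subset: "coherent J S \<Longrightarrow> S' \<subseteq> S \<Longrightarrow> coherent J S'"
  unfolding coherent_def by blast

lemma coherent_similar: "coherent J S \<Longrightarrow> t \<in> S \<Longrightarrow> t' \<in> S \<Longrightarrow> similar J (cs ! t) (cs ! t')"
  unfolding coherent_def by blast

lemma coherent_successors:
  assumes coh: "coherent J S"
    and outcome: "\<forall>t\<in>S. \<forall>t'\<in>S. eq_test_outcome T (cs ! t) = eq_test_outcome T (cs ! t')"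
    and two: "2 \<le> card S" and t0: "t0 \<in> S"
  shows "coherent (remaining_regs T J (cs ! t0)) (Suc ` S)"
proof -
  have step_sim: "result_similar (remaining_regs T J (cs ! t0)) (step T w (cs ! t)) (step T w (cs ! t'))"
    if "t \<in> S" "t' \<in> S" for t t'
  proof -
    have "remaining_regs T J (cs ! t) = remaining_regs T J (cs ! t0)"
      using coherent_similar[OF coh \<open>t \<in> S\<close> t0] by (intro remaining_regs_cong) (simp add: similar_def)
    with step_similar[OF coherent_similar[OF coh that] outcome[rule_format, OF that]]
    show ?thesis by simp
  qed
  have has_successor: "Suc t < length cs" if t: "t \<in> S" for t
  proof (rule ccontr)
    assume "\<not> Suc t < length cs"
    moreover have "t < length cs" using t coh by (auto simp: coherent_def)
    ultimately have "t = length cs - 1" by simp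
    then have last: "cs ! t = last cs"
      by (simp add: last_conv_nth run_nonempty)
    from two t obtain t' where t': "t' \<in> S" "t' \<noteq> t"
      by (metis card_le_Suc0_iff_eq coherent_finite[OF coh] not_less_eq_eq numeral_2_eq_2)
    with coh \<open>t = length cs - 1\<close> have "Suc t' < length cs" by (auto simp: coherent_def)
    with step_sim[OF t t'(1)] run_step have "\<exists>d. step T w (cs ! t) = Cont d"
      by (auto dest: result_similar_ContD)
    with run_halts last show False by metis
  qed
  show ?thesis
    unfolding coherent_def using has_successor step_sim run_step by auto
qed

lemma card_le_by_outcome_classes:
  assumes coh: "coherent J S" and t0: "t0 \<in> S"
    and classes: "\<And>b. card {t \<in> S. eq_test_outcome T (cs ! t) = b} \<le> 2 ^ card (remaining_regs T J (cs ! t0))"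
  shows "card S \<le> 2 ^ card J"
proof -
  define K where "K = remaining_regs T J (cs ! t0)"
  define part where "part b = {t \<in> S. eq_test_outcome T (cs ! t) = b}" for b
  have "K \<subseteq> J" unfolding K_def by (rule remaining_regs_subset)
  then consider "K \<subset> J" | "K = J" by blast
  then show ?thesis
  proof cases
    case 1
    have "card S = card (part True) + card (part False)"
      using coherent_finite[OF coh]
      by (subst card_Un_disjoint[symmetric]) (auto simp: part_def intro: arg_cong[where f = card])
    also have "\<dots> \<le> 2 ^ Suc (card K)" using classes[of True] classes[of False] by (simp add: K_def part_def)
    also have "\<dots> \<le> 2 ^ card J"
      using psubset_card_mono[OF finite 1] by (intro power_increasing) simp_all
    finally show ?thesis .
  next
    case 2
    have "S = part (eq_test_outcome T (cs ! t0))"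
      using eq_test_outcome_eq_if_remaining_regs_eq[OF coherent_similar[OF coh t0]] 2
      by (auto simp: part_def K_def)
    then show ?thesis using classes 2 by (metis K_def part_def)
  qed
qed

lemma coherent_card_le: "coherent J S \<Longrightarrow> card S \<le> 2 ^ card J"
proof -
  have "card S \<le> 2 ^ card J" if "coherent J S" "\<forall>t\<in>S. length cs \<le> t + n" for n J S
    using that
  proof (induction n arbitrary: J S)
    case 0
    then have "S = {}" by (fastforce simp: coherent_def)
    then show ?case by simp
  next
    case (Suc n)
    note coh = Suc.prems(1)
    show ?case
    proof (cases "S = {}")
      case True
      then show ?thesis by simp
    next
      case False
      then obtain t0 where t0: "t0 \<in> S" by blast
      define K where "K = remaining_regs T J (cs ! t0)"
      define part where "part b = {t \<in> S. eq_test_outcome T (cs ! t) = b}" for b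
      have part_le: "card (part b) \<le> 2 ^ card K" for b
      proof (cases "card (part b) \<le> 1")
        case True
        then show ?thesis using one_le_power[of "2::nat" "card K"] by linarith
      next
        case False
        then obtain t1 where t1: "t1 \<in> part b" by fastforce
        have coh_part: "coherent J (part b)" using coherent_subset[OF coh] by (auto simp: part_def)
        have "K = remaining_regs T J (cs ! t1)"
          using coherent_similar[OF coh t0, of t1] t1 unfolding K_def part_def
          by (intro remaining_regs_cong) (simp add: similar_def)
        with coherent_successors[OF coh_part _ _ t1] False
        have "coherent K (Suc ` part b)" by (simp add: part_def)
        moreover have "\<forall>t\<in>Suc ` part b. length cs \<le> t + n" using Suc.prems(2) by (auto simp: part_def)
        ultimately have "card (Suc ` part b) \<le> 2 ^ card K" by (rule Suc.IH)
        then show ?thesis by (simp add: card_image)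
      qed
      show ?thesis
        using card_le_by_outcome_classes[OF coh t0] part_le by (simp add: K_def part_def)
    qed
  qed
  moreover have "\<forall>t\<in>S. length cs \<le> t + length cs" by simp
  ultimately show "coherent J S \<Longrightarrow> card S \<le> 2 ^ card J" by blast
qed

lemma card_visits_le:
  "card {i. i < length cs \<and> pos (cs ! i) = p \<and> st (cs ! i) = q \<and> {r. regs (cs ! i) r = None} = D}
     \<le> 2 ^ CARD('r)"
proof -
  have "coherent UNIV {i. i < length cs \<and> pos (cs ! i) = p \<and> st (cs ! i) = q \<and> {r. regs (cs ! i) r = None} = D}"
    unfolding coherent_def similar_def by auto
  then show ?thesis by (rule coherent_card_le)
qed

end

theorem mainTheorem18:
  fixes T :: "('q::finite, 'r::finite) sut"
  assumes "wf_sut T"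
  shows "\<exists>k::nat. k \<ge> 1 \<and>
           (\<forall>w cs p. set w \<subseteq> {a. inP (sigma T) a} \<longrightarrow> accepting_run T w cs \<longrightarrow>
              length (filter (\<lambda>c. pos c = p) cs) \<le> k)"
proof (intro exI conjI allI impI)
  show "1 \<le> CARD('q) * 2 ^ CARD('r) * 2 ^ CARD('r)"
    by (simp add: Suc_le_eq card_gt_0_iff)
next
  fix w cs p
  assume "accepting_run T w cs"
  then have run_step: "\<And>i. Suc i < length cs \<Longrightarrow> step T w (cs ! i) = Cont (cs ! Suc i)"
    and run_nonempty: "cs \<noteq> []" and run_halts: "\<And>d. step T w (last cs) \<noteq> Cont d"
    by (auto simp: accepting_run_def)
  define visits where "visits = (\<lambda>(q, D). {i. i < length cs \<and> pos (cs ! i) = p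
                                   \<and> st (cs ! i) = q \<and> {r. regs (cs ! i) r = None} = D})"
  have "length (filter (\<lambda>c. pos c = p) cs) = card (\<Union>k. visits k)"
    by (auto simp: length_filter_conv_card visits_def intro: arg_cong[where f = card])
  also have "\<dots> \<le> (\<Sum>k\<in>(UNIV :: ('q \<times> 'r set) set). card (visits k))"
    by (rule card_UN_le) simp
  also have "\<dots> \<le> (\<Sum>k\<in>(UNIV :: ('q \<times> 'r set) set). 2 ^ CARD('r))"
    by (rule sum_mono)
       (auto simp: visits_def intro: card_visits_le[OF run_step run_nonempty run_halts])
  also have "\<dots> = CARD('q) * 2 ^ CARD('r) * 2 ^ CARD('r)"
    by (simp add: card_UNIV_set)
  finally show "length (filter (\<lambda>c. pos c = p) cs) \<le> CARD('q) * 2 ^ CARD('r) * 2 ^ CARD('r)" .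
qed

end
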